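(* Let $n\ge 1$ and let $p$ be a probability distribution on $\{0,1\}^n$ with $p(x)>0$ for all $x$. For nonempty subsets $I,J\subseteq\{1,\dots,n\}$, the Fisher information between the coordinates $\eta_I$ and $\eta_J$ at $p$ is $$g^{IJ}(\eta)=\sum_{K\subseteq I\cap J}(-1)^{|I-K|+|J-K|}\cdot\frac{1}{p_K},$$ where $|\cdot|$ denotes cardinality.
   Context: For $K\subseteq\{1,\dots,n\}$ (including $K=\emptyset$), $p_K$ denotes $p(x)$ at the point $x$ with $x_i=1$ for $i\in K$ and $x_i=0$ for $i\notin K$. For $I\neq\emptyset$, $X_I(x)=\prod_{i\in I}x_i$ and the $\eta$-coordinates are $\eta_I=E_p[X_I]$; $(\eta_I)_{I\neq\emptyset}$ is a coordinate system on the manifold of strictly positive distributions on $\{0,1\}^n$. For a coordinate system $\xi$, the Fisher information is $g_{ij}=E_p\big[\frac{\partial\log p(x;\xi)}{\partial\xi_i}\frac{\partial\log p(x;\xi)}{\partial\xi_j}\big]$. *)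

theory Defs
  imports "HOL-Analysis.Analysis"
begin

text \<open>A point x of {0,1}^n is identified with the set K = {i. x_i = 1} \<subseteq> {1..n};
  a distribution is a function p :: nat set \<Rightarrow> real, p K = p_K.\<close>

definition pos_dist :: "nat \<Rightarrow> (nat set \<Rightarrow> real) \<Rightarrow> bool" where
  "pos_dist n p \<longleftrightarrow> (\<forall>K. K \<subseteq> {1..n} \<longrightarrow> p K > 0) \<and> (\<Sum>K\<in>Pow {1..n}. p K) = 1"

text \<open>X_I(x) = prod_{i in I} x_i\<close>
definition X :: "nat set \<Rightarrow> nat set \<Rightarrow> real" where
  "X I K = (if I \<subseteq> K then 1 else 0)"

definition eta :: "nat \<Rightarrow> (nat set \<Rightarrow> real) \<Rightarrow> nat set \<Rightarrow> real" where
  "eta n p I = (\<Sum>K\<in>Pow {1..n}. p K * X I K)"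

definition dist_of_eta :: "nat \<Rightarrow> (nat set \<Rightarrow> real) \<Rightarrow> nat set \<Rightarrow> real" where
  "dist_of_eta n e = (THE q. pos_dist n q \<and> (\<forall>K. \<not> K \<subseteq> {1..n} \<longrightarrow> q K = 0) \<and>
      (\<forall>I. I \<subseteq> {1..n} \<longrightarrow> I \<noteq> {} \<longrightarrow> eta n q I = e I))"

definition dlog_eta :: "nat \<Rightarrow> (nat set \<Rightarrow> real) \<Rightarrow> nat set \<Rightarrow> nat set \<Rightarrow> real" where
  "dlog_eta n p I K = deriv (\<lambda>t. ln (dist_of_eta n ((eta n p)(I := t)) K)) (eta n p I)"

definition fisher_eta :: "nat \<Rightarrow> (nat set \<Rightarrow> real) \<Rightarrow> nat set \<Rightarrow> nat set \<Rightarrow> real" where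
  "fisher_eta n p I J = (\<Sum>K\<in>Pow {1..n}. p K * dlog_eta n p I K * dlog_eta n p J K)"

end

theory Submission imports Defs begin

text \<open>The map q \<mapsto> eta(q) (with eta_{} = total mass) is the zeta transform of the subset lattice,
  so it is inverted by the Moebius function mu(K,I) = (-1)^|I-K| for K \<subseteq> I. Hence q is affine in
  eta: moving eta_L alone by s moves q_K by s mu(K,L), the log-derivative of p_K in eta_L is
  mu(K,L)/p_K, and the Fisher information is \<Sum>_K mu(K,I) mu(K,J)/p_K.\<close>

definition subset_moebius :: "nat set \<Rightarrow> nat set \<Rightarrow> real" where
  "subset_moebius K I = (if K \<subseteq> I then (-1) ^ card (I - K) else 0)"

lemma sum_alternating_supersets:
  assumes "finite S" "U \<subseteq> S"
  shows "(\<Sum>T | T \<subseteq> S \<and> U \<subseteq> T. (-1::real) ^ card (T - U)) = (if U = S then 1 else 0)"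
proof -
  have fin: "finite {T. T \<subseteq> S \<and> U \<subseteq> T}"
    using assms by (auto intro: finite_subset[of _ "Pow S"])
  have sign: "(-1::real) ^ card (T - U) = (-1) ^ card U * (-1) ^ card T" if "T \<subseteq> S" "U \<subseteq> T" for T
  proof -
    have "card T = card (T - U) + card U"
      using that assms by (metis card_Diff_subset card_mono finite_subset le_add_diff_inverse2)
    thus ?thesis by (simp add: power_add mult_ac)
  qed
  have "(\<Sum>T | T \<subseteq> S \<and> U \<subseteq> T. (-1::real) ^ card (T - U))
      = (-1) ^ card U * (\<Sum>T | T \<subseteq> S \<and> U \<subseteq> T. (-1::real) ^ card T)"
    by (simp add: sum_distrib_left sign)
  also have "\<dots> = (if U = S then 1 else 0)"
  proof (cases "U = S")
    case True
    then have "{T. T \<subseteq> S \<and> U \<subseteq> T} = {S}" by auto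
    then show ?thesis using True by (simp flip: power_add)
  next
    case False
    then have "U \<subset> S" using assms by auto
    then show ?thesis
      using False fin by (simp add: sum_alternating_cancels card_subsupersets_even_odd assms(1))
  qed
  finally show ?thesis .
qed

lemma sum_subset_moebius_X:
  assumes "finite V" "K \<subseteq> V" "L \<subseteq> V"
  shows "(\<Sum>I\<in>Pow V. subset_moebius K I * X I L) = (if K = L then 1 else 0)"
proof (cases "K \<subseteq> L")
  case True
  have "(\<Sum>I\<in>Pow V. subset_moebius K I * X I L) = (\<Sum>I | I \<subseteq> L \<and> K \<subseteq> I. (-1::real) ^ card (I - K))"
    using assms by (intro sum.mono_neutral_cong_right)
      (auto simp: subset_moebius_def X_def intro: finite_subset[of _ "Pow V"])
  also have "\<dots> = (if K = L then 1 else 0)"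
    using sum_alternating_supersets[of L K] True assms finite_subset by blast
  finally show ?thesis .
next
  case False
  then have "\<forall>I\<in>Pow V. subset_moebius K I * X I L = 0" by (auto simp: subset_moebius_def X_def)
  then show ?thesis using False by (simp add: sum.neutral)
qed

lemma sum_X_subset_moebius:
  assumes "finite V" "I \<subseteq> V" "J \<subseteq> V"
  shows "(\<Sum>K\<in>Pow V. X I K * subset_moebius K J) = (if I = J then 1 else 0)"
proof (cases "I \<subseteq> J")
  case True
  have fJ: "finite J" using assms finite_subset by blast
  have sign: "subset_moebius K J = (-1) ^ card (J - I) * (-1::real) ^ card (K - I)"
    if "I \<subseteq> K" "K \<subseteq> J" for K
  proof -
    have "J - I = (J - K) \<union> (K - I)" "(J - K) \<inter> (K - I) = {}" using that by auto
    hence "card (J - I) = card (J - K) + card (K - I)"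
      using fJ that by (metis card_Un_disjoint finite_Diff finite_subset)
    hence "(-1::real) ^ card (J - I) * (-1) ^ card (K - I) = (-1) ^ card (J - K) * ((-1) ^ card (K - I))\<^sup>2"
      by (simp add: power_add power2_eq_square mult_ac)
    also have "((-1::real) ^ card (K - I))\<^sup>2 = 1"
      by (metis mult.commute power_mult power_minus1_even)
    finally show ?thesis using that by (simp add: subset_moebius_def)
  qed
  have "(\<Sum>K\<in>Pow V. X I K * subset_moebius K J) = (\<Sum>K | K \<subseteq> J \<and> I \<subseteq> K. subset_moebius K J)"
    using assms by (intro sum.mono_neutral_cong_right)
      (auto simp: subset_moebius_def X_def intro: finite_subset[of _ "Pow V"])
  also have "\<dots> = (-1) ^ card (J - I) * (\<Sum>K | K \<subseteq> J \<and> I \<subseteq> K. (-1::real) ^ card (K - I))"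
    by (simp add: sum_distrib_left sign)
  also have "\<dots> = (if I = J then 1 else 0)"
    using sum_alternating_supersets[of J I] True fJ by simp
  finally show ?thesis .
next
  case False
  then have "\<forall>K\<in>Pow V. X I K * subset_moebius K J = 0" by (auto simp: subset_moebius_def X_def)
  then show ?thesis using False by (simp add: sum.neutral)
qed

lemma eta_empty: "eta n q {} = (\<Sum>K\<in>Pow {1..n}. q K)"
  by (simp add: eta_def X_def)

lemma moebius_inversion_eta:
  assumes "K \<subseteq> {1..n}"
  shows "(\<Sum>I\<in>Pow {1..n}. subset_moebius K I * eta n q I) = q K"
proof -
  have "(\<Sum>I\<in>Pow {1..n}. subset_moebius K I * eta n q I)
      = (\<Sum>L\<in>Pow {1..n}. q L * (\<Sum>I\<in>Pow {1..n}. subset_moebius K I * X I L))"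
    unfolding eta_def sum_distrib_left
    by (subst sum.swap) (simp add: mult.left_commute)
  also have "\<dots> = (\<Sum>L\<in>Pow {1..n}. q L * (if K = L then 1 else 0))"
    using assms by (intro sum.cong) (auto simp: sum_subset_moebius_X)
  also have "\<dots> = q K" using assms by (simp add: if_distrib cong: if_cong)
  finally show ?thesis .
qed

lemma eta_add_subset_moebius:
  assumes "J \<subseteq> {1..n}" "L \<subseteq> {1..n}"
  shows "eta n (\<lambda>K. q K + s * subset_moebius K L) J = eta n q J + (if J = L then s else 0)"
proof -
  have "eta n (\<lambda>K. q K + s * subset_moebius K L) J
      = eta n q J + s * (\<Sum>K\<in>Pow {1..n}. X J K * subset_moebius K L)"
    by (simp add: eta_def algebra_simps sum.distrib sum_distrib_left)
  then show ?thesis using assms by (simp add: sum_X_subset_moebius)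
qed

lemma dist_of_eta_eqI:
  assumes "pos_dist n q" "\<And>K. \<not> K \<subseteq> {1..n} \<Longrightarrow> q K = 0"
    and "\<And>I. I \<subseteq> {1..n} \<Longrightarrow> I \<noteq> {} \<Longrightarrow> eta n q I = e I"
  shows "dist_of_eta n e = q"
  unfolding dist_of_eta_def
proof (rule the_equality)
  show "pos_dist n q \<and> (\<forall>K. \<not> K \<subseteq> {1..n} \<longrightarrow> q K = 0) \<and>
      (\<forall>I. I \<subseteq> {1..n} \<longrightarrow> I \<noteq> {} \<longrightarrow> eta n q I = e I)"
    using assms by blast
next
  fix q' assume q': "pos_dist n q' \<and> (\<forall>K. \<not> K \<subseteq> {1..n} \<longrightarrow> q' K = 0) \<and>
      (\<forall>I. I \<subseteq> {1..n} \<longrightarrow> I \<noteq> {} \<longrightarrow> eta n q' I = e I)"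
  have same_eta: "eta n q' I = eta n q I" if "I \<subseteq> {1..n}" for I
    using q' assms that by (cases "I = {}") (auto simp: eta_empty pos_dist_def)
  show "q' = q"
  proof
    fix K show "q' K = q K"
    proof (cases "K \<subseteq> {1..n}")
      case True
      then show ?thesis
        using moebius_inversion_eta[OF True, of q'] moebius_inversion_eta[OF True, of q] same_eta
        by (metis (no_types, lifting) PowD sum.cong)
    qed (use q' assms in auto)
  qed
qed

lemma dist_of_eta_add_subset_moebius:
  assumes p: "pos_dist n p" and L: "L \<subseteq> {1..n}" "L \<noteq> {}"
    and pos: "\<And>K. K \<subseteq> {1..n} \<Longrightarrow> p K + s * subset_moebius K L > 0"
  shows "dist_of_eta n ((eta n p)(L := eta n p L + s))
    = (\<lambda>K. if K \<subseteq> {1..n} then p K + s * subset_moebius K L else 0)" (is "_ = ?q")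
proof (rule dist_of_eta_eqI)
  have eta_q: "eta n ?q J = eta n p J + (if J = L then s else 0)" if "J \<subseteq> {1..n}" for J
  proof -
    have "eta n ?q J = eta n (\<lambda>K. p K + s * subset_moebius K L) J"
      unfolding eta_def by (intro sum.cong) auto
    then show ?thesis using eta_add_subset_moebius[OF that L(1)] by simp
  qed
  show "pos_dist n ?q"
    using eta_q[of "{}"] L(2) p pos by (simp add: pos_dist_def eta_empty)
  show "eta n ?q I = ((eta n p)(L := eta n p L + s)) I" if "I \<subseteq> {1..n}" for I
    using eta_q[OF that] by simp
qed simp

lemma dlog_eta_eq:
  assumes p: "pos_dist n p" and L: "L \<subseteq> {1..n}" "L \<noteq> {}" and K: "K \<subseteq> {1..n}"
  shows "dlog_eta n p L K = subset_moebius K L / p K"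
proof -
  define a where "a = eta n p L"
  have "\<forall>\<^sub>F t in nhds a. p K' + (t - a) * subset_moebius K' L > 0" if "K' \<in> Pow {1..n}" for K'
  proof (rule order_tendstoD(1))
    show "((\<lambda>t. p K' + (t - a) * subset_moebius K' L) \<longlongrightarrow> p K' + (a - a) * subset_moebius K' L) (nhds a)"
      by (intro tendsto_intros filterlim_ident)
    show "p K' + (a - a) * subset_moebius K' L > 0" using p that by (simp add: pos_dist_def)
  qed
  then have "\<forall>\<^sub>F t in nhds a. \<forall>K'\<in>Pow {1..n}. p K' + (t - a) * subset_moebius K' L > 0"
    by (simp add: eventually_ball_finite)
  then have local_eq: "\<forall>\<^sub>F t in nhds a. ln (dist_of_eta n ((eta n p)(L := t)) K) = ln (p K + (t - a) * subset_moebius K L)"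
  proof (rule eventually_mono)
    fix t assume "\<forall>K'\<in>Pow {1..n}. p K' + (t - a) * subset_moebius K' L > 0"
    then have "dist_of_eta n ((eta n p)(L := eta n p L + (t - a)))
        = (\<lambda>K. if K \<subseteq> {1..n} then p K + (t - a) * subset_moebius K L else 0)"
      using dist_of_eta_add_subset_moebius[OF p L] by blast
    then show "ln (dist_of_eta n ((eta n p)(L := t)) K) = ln (p K + (t - a) * subset_moebius K L)"
      using K by (simp add: a_def)
  qed
  have "((\<lambda>t. ln (p K + (t - a) * subset_moebius K L)) has_real_derivative subset_moebius K L / p K) (at a)"
    using p K by (auto simp: pos_dist_def intro!: derivative_eq_intros)
  then have "((\<lambda>t. ln (dist_of_eta n ((eta n p)(L := t)) K)) has_real_derivative subset_moebius K L / p K) (at a)"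
    by (subst DERIV_cong_ev[OF refl local_eq refl])
  then show ?thesis unfolding dlog_eta_def a_def[symmetric] by (rule DERIV_imp_deriv)
qed

theorem proposition2:
  fixes n :: nat and p :: "nat set \<Rightarrow> real" and I J :: "nat set"
  assumes "n \<ge> 1" and "pos_dist n p"
    and "I \<subseteq> {1..n}" "I \<noteq> {}" and "J \<subseteq> {1..n}" "J \<noteq> {}"
  shows "fisher_eta n p I J =
    (\<Sum>K\<in>Pow (I \<inter> J). (-1) ^ (card (I - K) + card (J - K)) * (1 / p K))"
proof -
  have p_pos: "p K > 0" if "K \<subseteq> {1..n}" for K
    using assms(2) that by (simp add: pos_dist_def)
  have "fisher_eta n p I J = (\<Sum>K\<in>Pow {1..n}. subset_moebius K I * subset_moebius K J / p K)"
    unfolding fisher_eta_def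
    using assms p_pos by (intro sum.cong) (auto simp: dlog_eta_eq power2_eq_square)
  also have "\<dots> = (\<Sum>K\<in>Pow (I \<inter> J). (-1) ^ (card (I - K) + card (J - K)) * (1 / p K))"
    using assms by (intro sum.mono_neutral_cong_right) (auto simp: subset_moebius_def power_add)
  finally show ?thesis .
qed

end
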